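(* In the RSP setting described in the context, let $b\in\mathbb{N}^+$ and let $i^*$ be the smallest integer $i\ge 0$ such that $C_{\mathrm{opt}}(G^-_{S_i})>b$ (assuming such an $i$ exists). Define $L'=b\cdot S_{i^*}$, and $U'=U$ if $i^*=0$, $U'=2S_{i^*}(b+n)$ if $i^*>0$. Then $L'\le C_{\mathrm{opt}}(G)\le U'$ and $U'/L'\in O(1+n/b)$.
   Context: RSP setting: $G=(V,E,c,r)$ is a weakly connected directed graph with $n=|V|$, $m=|E|$, $c,r:E\to\mathbb{R}_{\ge0}$, vertices $s\ne t$, bound $R\ge 0$. Paths are edge sets; $P_v$ = set of paths from $s$ to $v$; $C_G(p)=\sum_{e\in p}c(e)$, $R_G(p)=\sum_{e\in p}r(e)$; $C_{\mathrm{opt}}(G)=\min\{C_G(p):p\in P_t,\ R_G(p)\le R\}$. It is assumed that a path $p\in P_t$ with $R_G(p)\le R$ exists and that $C_{\mathrm{opt}}(G)>0$. For $S>0$, $G^-_S=(V,E,c^-_S,r)$ with $c^-_S(e)=\lfloor c(e)/S\rfloor$ (same $s,t,R$). Bounds $L,U$: sort the edges $e_1,\dots,e_m$ ascending by cost; let $j^*$ be the smallest $j$ such that some $p\in P_t$ with $R_G(p)\le R$ uses only edges from $\{e_1,\dots,e_j\}$; set $L=c(e_{j^*})$ and $U=nL$ (these satisfy $L\le C_{\mathrm{opt}}(G)\le U$). Scaling factors: $S_i=2^{-i}U/(2n)$ for $i\in\mathbb{N}_0$. *)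

theory Defs
  imports Main "HOL-Library.Sublist" Complex_Main
begin

definition graph_ok :: "'v set \<Rightarrow> 'e set \<Rightarrow> ('e \<Rightarrow> 'v) \<Rightarrow> ('e \<Rightarrow> 'v) \<Rightarrow> bool" where
  "graph_ok V E src dst \<longleftrightarrow> finite V \<and> finite E \<and> (\<forall>e\<in>E. src e \<in> V \<and> dst e \<in> V)"

definition weakly_connected :: "'v set \<Rightarrow> 'e set \<Rightarrow> ('e \<Rightarrow> 'v) \<Rightarrow> ('e \<Rightarrow> 'v) \<Rightarrow> bool" where
  "weakly_connected V E src dst \<longleftrightarrow>
     V \<noteq> {} \<and>
     (\<forall>u\<in>V. \<forall>w\<in>V. (u, w) \<in> ({(src e, dst e) | e. e \<in> E} \<union> {(dst e, src e) | e. e \<in> E})\<^sup>*)"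

text \<open>p is (the edge set of) a simple path from u to v: there is an edge list es
  whose vertex sequence u, dst(es!0), ..., dst(last es) is repetition-free and ends in v.\<close>
definition is_path :: "'e set \<Rightarrow> ('e \<Rightarrow> 'v) \<Rightarrow> ('e \<Rightarrow> 'v) \<Rightarrow> 'v \<Rightarrow> 'v \<Rightarrow> 'e set \<Rightarrow> bool" where
  "is_path E src dst u v p \<longleftrightarrow>
     (\<exists>es. set es \<subseteq> E \<and> p = set es \<and>
        (\<forall>i<length es. src (es ! i) = (u # map dst es) ! i) \<and>
        last (u # map dst es) = v \<and> distinct (u # map dst es))"

definition path_cost :: "('e \<Rightarrow> real) \<Rightarrow> 'e set \<Rightarrow> real" where
  "path_cost c p = (\<Sum>e\<in>p. c e)"

definition C_opt :: "'e set \<Rightarrow> ('e \<Rightarrow> 'v) \<Rightarrow> ('e \<Rightarrow> 'v) \<Rightarrow> ('e \<Rightarrow> real) \<Rightarrow> ('e \<Rightarrow> real)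
                     \<Rightarrow> 'v \<Rightarrow> 'v \<Rightarrow> real \<Rightarrow> real" where
  "C_opt E src dst c r s t R =
     Min {path_cost c p | p. is_path E src dst s t p \<and> path_cost r p \<le> R}"

definition cminus :: "('e \<Rightarrow> real) \<Rightarrow> real \<Rightarrow> 'e \<Rightarrow> real" where
  "cminus c S = (\<lambda>e. real_of_int \<lfloor>c e / S\<rfloor>)"

definition rsp_setting :: "'v set \<Rightarrow> 'e set \<Rightarrow> ('e \<Rightarrow> 'v) \<Rightarrow> ('e \<Rightarrow> 'v) \<Rightarrow> ('e \<Rightarrow> real)
                            \<Rightarrow> ('e \<Rightarrow> real) \<Rightarrow> 'v \<Rightarrow> 'v \<Rightarrow> real \<Rightarrow> bool" where
  "rsp_setting V E src dst c r s t R \<longleftrightarrow>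
     graph_ok V E src dst \<and> weakly_connected V E src dst \<and>
     (\<forall>e\<in>E. c e \<ge> 0 \<and> r e \<ge> 0) \<and>
     s \<in> V \<and> t \<in> V \<and> s \<noteq> t \<and> R \<ge> 0 \<and>
     (\<exists>p. is_path E src dst s t p \<and> path_cost r p \<le> R) \<and>
     C_opt E src dst c r s t R > 0"

text \<open>es is the edge set sorted ascending by cost (e_1, ..., e_m = es!0, ..., es!(m-1)).\<close>
definition sorted_edges :: "'e set \<Rightarrow> ('e \<Rightarrow> real) \<Rightarrow> 'e list \<Rightarrow> bool" where
  "sorted_edges E c es \<longleftrightarrow> distinct es \<and> set es = E \<and> sorted (map c es)"

definition j_star :: "'e set \<Rightarrow> ('e \<Rightarrow> 'v) \<Rightarrow> ('e \<Rightarrow> 'v) \<Rightarrow> ('e \<Rightarrow> real) \<Rightarrow> 'v \<Rightarrow> 'v \<Rightarrow> real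
                     \<Rightarrow> 'e list \<Rightarrow> nat" where
  "j_star E src dst r s t R es =
     (LEAST j. \<exists>p. is_path E src dst s t p \<and> path_cost r p \<le> R \<and> p \<subseteq> set (take j es))"

definition bound_L :: "'e set \<Rightarrow> ('e \<Rightarrow> 'v) \<Rightarrow> ('e \<Rightarrow> 'v) \<Rightarrow> ('e \<Rightarrow> real) \<Rightarrow> ('e \<Rightarrow> real)
                       \<Rightarrow> 'v \<Rightarrow> 'v \<Rightarrow> real \<Rightarrow> 'e list \<Rightarrow> real" where
  "bound_L E src dst c r s t R es = c (es ! (j_star E src dst r s t R es - 1))"

definition bound_U :: "'v set \<Rightarrow> 'e set \<Rightarrow> ('e \<Rightarrow> 'v) \<Rightarrow> ('e \<Rightarrow> 'v) \<Rightarrow> ('e \<Rightarrow> real) \<Rightarrow> ('e \<Rightarrow> real)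
                       \<Rightarrow> 'v \<Rightarrow> 'v \<Rightarrow> real \<Rightarrow> 'e list \<Rightarrow> real" where
  "bound_U V E src dst c r s t R es = real (card V) * bound_L E src dst c r s t R es"

definition scale :: "'v set \<Rightarrow> real \<Rightarrow> nat \<Rightarrow> real" where
  "scale V U i = (1/2) ^ i * U / (2 * real (card V))"

end

theory Submission
  imports Defs
begin

(* Rounding down changes the cost of an edge by less than one unit of S, so a path with
   at most n - 1 edges satisfies c(p)/S - n <= c_S(p) <= c(p)/S, and both bounds transfer to
   the optima. Hence Copt(G_S) > b at S = S_i* gives Copt(G) > b S, while Copt(G_2S) <= b at the
   previous scale gives Copt(G) <= 2S(b + n). For i* = 0 one uses Copt(G) <= U = 2n S_0 instead;
   in both cases U'/L' <= 2(b + n)/b. *)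

definition feasible_paths ::
    "'e set \<Rightarrow> ('e \<Rightarrow> 'v) \<Rightarrow> ('e \<Rightarrow> 'v) \<Rightarrow> ('e \<Rightarrow> real) \<Rightarrow> 'v \<Rightarrow> 'v \<Rightarrow> real \<Rightarrow> 'e set set" where
  "feasible_paths E src dst r s t R = {p. is_path E src dst s t p \<and> path_cost r p \<le> R}"

lemma C_opt_eq_Min_image:
  "C_opt E src dst c r s t R = Min (path_cost c ` feasible_paths E src dst r s t R)"
  unfolding C_opt_def feasible_paths_def by (simp add: setcompr_eq_image)

lemma is_path_subset: "is_path E src dst u v p \<Longrightarrow> p \<subseteq> E"
  unfolding is_path_def by auto

lemma finite_feasible_paths: "finite E \<Longrightarrow> finite (feasible_paths E src dst r s t R)"
  by (rule finite_subset[of _ "Pow E"]) (auto simp: feasible_paths_def dest: is_path_subset)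

lemma card_path_less_card_vertices:
  assumes "is_path E src dst u v p" "graph_ok V E src dst" "u \<in> V"
  shows "card p < card V"
proof -
  obtain es where es: "set es \<subseteq> E" "p = set es" "distinct (u # map dst es)"
    using assms(1) unfolding is_path_def by blast
  have "card p \<le> length es"
    unfolding es(2) by (rule card_length)
  also have "\<dots> < length (u # map dst es)"
    by simp
  also have "\<dots> = card (set (u # map dst es))"
    using es(3) by (rule distinct_card[symmetric])
  also have "\<dots> \<le> card V"
    using es(1) assms(2,3) unfolding graph_ok_def by (intro card_mono) auto
  finally show ?thesis .
qed

lemma C_opt_le_path_cost:
  assumes "finite E" "p \<in> feasible_paths E src dst r s t R"
  shows "C_opt E src dst c r s t R \<le> path_cost c p"
proof -
  have "finite (path_cost c ` feasible_paths E src dst r s t R)"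
    using finite_feasible_paths[OF assms(1)] by (rule finite_imageI)
  then show ?thesis
    unfolding C_opt_eq_Min_image using assms(2) by (auto intro: Min_le)
qed

lemma C_opt_attained:
  assumes "finite E" "feasible_paths E src dst r s t R \<noteq> {}"
  obtains p where "p \<in> feasible_paths E src dst r s t R" "C_opt E src dst c r s t R = path_cost c p"
proof -
  have "C_opt E src dst c r s t R \<in> path_cost c ` feasible_paths E src dst r s t R"
    unfolding C_opt_eq_Min_image
    using finite_feasible_paths[OF assms(1)] assms(2) by (intro Min_in finite_imageI) simp_all
  then show ?thesis using that by blast
qed

lemma rsp_setting_finite_edges: "rsp_setting V E src dst c r s t R \<Longrightarrow> finite E"
  unfolding rsp_setting_def graph_ok_def by simp

lemma rsp_setting_feasible_paths_nonempty:
  "rsp_setting V E src dst c r s t R \<Longrightarrow> feasible_paths E src dst r s t R \<noteq> {}"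
  unfolding rsp_setting_def feasible_paths_def by simp

lemma rsp_setting_card_vertices_pos: "rsp_setting V E src dst c r s t R \<Longrightarrow> card V > 0"
  unfolding rsp_setting_def graph_ok_def by (simp add: card_gt_0_iff) blast

lemma rsp_setting_C_opt_attained:
  assumes "rsp_setting V E src dst c r s t R"
  obtains p where "p \<in> feasible_paths E src dst r s t R" "C_opt E src dst c' r s t R = path_cost c' p"
  using C_opt_attained[OF rsp_setting_finite_edges[OF assms] rsp_setting_feasible_paths_nonempty[OF assms]] .

lemma rsp_setting_C_opt_le_path_cost:
  "rsp_setting V E src dst c r s t R \<Longrightarrow> p \<in> feasible_paths E src dst r s t R
    \<Longrightarrow> C_opt E src dst c' r s t R \<le> path_cost c' p"
  by (rule C_opt_le_path_cost[OF rsp_setting_finite_edges])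

lemma rsp_setting_feasible_path_props:
  assumes "rsp_setting V E src dst c r s t R" "p \<in> feasible_paths E src dst r s t R"
  shows "\<forall>e\<in>p. c e \<ge> 0" "card p < card V"
proof -
  have path: "is_path E src dst s t p"
    using assms(2) unfolding feasible_paths_def by simp
  have "\<forall>e\<in>E. c e \<ge> 0" "graph_ok V E src dst" "s \<in> V"
    using assms(1) unfolding rsp_setting_def by simp_all
  then show "\<forall>e\<in>p. c e \<ge> 0" "card p < card V"
    using is_path_subset[OF path] card_path_less_card_vertices[OF path] by auto
qed

lemma path_cost_cminus_le: "S > 0 \<Longrightarrow> path_cost (cminus c S) p \<le> path_cost c p / S"
  unfolding path_cost_def cminus_def sum_divide_distrib by (intro sum_mono) linarith

lemma path_cost_cminus_ge: "path_cost c p / S - real (card p) \<le> path_cost (cminus c S) p"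
proof -
  have "path_cost c p / S - real (card p) = (\<Sum>e\<in>p. c e / S - 1)"
    unfolding path_cost_def by (simp add: sum_subtractf sum_divide_distrib)
  also have "\<dots> \<le> path_cost (cminus c S) p"
    unfolding path_cost_def cminus_def by (intro sum_mono) linarith
  finally show ?thesis .
qed

lemma path_cost_cminus_nonpos:
  assumes "S \<le> 0" "\<forall>e\<in>p. c e \<ge> 0"
  shows "path_cost (cminus c S) p \<le> 0"
  unfolding path_cost_def cminus_def
proof (intro sum_nonpos)
  fix e assume "e \<in> p"
  then have "c e / S \<le> 0"
    using assms by (simp add: divide_nonneg_nonpos)
  then show "real_of_int \<lfloor>c e / S\<rfloor> \<le> 0" by linarith
qed

lemma C_opt_cminus_le:
  assumes "rsp_setting V E src dst c r s t R" "S > 0"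
  shows "C_opt E src dst (cminus c S) r s t R \<le> C_opt E src dst c r s t R / S"
proof -
  obtain p where p: "p \<in> feasible_paths E src dst r s t R" "C_opt E src dst c r s t R = path_cost c p"
    using rsp_setting_C_opt_attained[OF assms(1)] .
  have "C_opt E src dst (cminus c S) r s t R \<le> path_cost (cminus c S) p"
    using assms(1) p(1) by (rule rsp_setting_C_opt_le_path_cost)
  also have "\<dots> \<le> path_cost c p / S"
    using assms(2) by (rule path_cost_cminus_le)
  finally show ?thesis using p(2) by simp
qed

lemma C_opt_cminus_ge:
  assumes "rsp_setting V E src dst c r s t R" "S > 0"
  shows "C_opt E src dst c r s t R / S - real (card V) \<le> C_opt E src dst (cminus c S) r s t R"
proof -
  obtain q where q: "q \<in> feasible_paths E src dst r s t R"
      "C_opt E src dst (cminus c S) r s t R = path_cost (cminus c S) q"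
    using rsp_setting_C_opt_attained[OF assms(1)] .
  have "C_opt E src dst c r s t R \<le> path_cost c q"
    using assms(1) q(1) by (rule rsp_setting_C_opt_le_path_cost)
  then have "C_opt E src dst c r s t R / S \<le> path_cost c q / S"
    using assms(2) by (simp add: divide_right_mono)
  moreover have "real (card q) \<le> real (card V)"
    using rsp_setting_feasible_path_props(2)[OF assms(1) q(1)] by simp
  ultimately show ?thesis
    using path_cost_cminus_ge[of c q S] q(2) by linarith
qed

lemma C_opt_cminus_nonpos:
  assumes "rsp_setting V E src dst c r s t R" "S \<le> 0"
  shows "C_opt E src dst (cminus c S) r s t R \<le> 0"
proof -
  obtain q where q: "q \<in> feasible_paths E src dst r s t R"
      "C_opt E src dst (cminus c S) r s t R = path_cost (cminus c S) q"
    using rsp_setting_C_opt_attained[OF assms(1)] .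
  show ?thesis
    using q(2) path_cost_cminus_nonpos[OF assms(2) rsp_setting_feasible_path_props(1)[OF assms(1) q(1)]]
    by simp
qed

lemma scale_pos_if_C_opt_cminus_gt:
  assumes "rsp_setting V E src dst c r s t R" "b \<ge> 0" "C_opt E src dst (cminus c S) r s t R > b"
  shows "S > 0"
  using assms C_opt_cminus_nonpos[OF assms(1), of S] by (cases "S > 0") auto

lemma C_opt_lower_bound_from_scaled:
  assumes "rsp_setting V E src dst c r s t R" "S > 0" "C_opt E src dst (cminus c S) r s t R > b"
  shows "b * S \<le> C_opt E src dst c r s t R"
proof -
  have "b < C_opt E src dst c r s t R / S"
    using assms C_opt_cminus_le[OF assms(1,2)] by linarith
  then show ?thesis
    using assms(2) by (simp add: pos_less_divide_eq)
qed

lemma C_opt_upper_bound_from_scaled: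
  assumes "rsp_setting V E src dst c r s t R" "S > 0" "C_opt E src dst (cminus c S) r s t R \<le> b"
  shows "C_opt E src dst c r s t R \<le> (b + real (card V)) * S"
proof -
  have "C_opt E src dst c r s t R / S \<le> b + real (card V)"
    using assms C_opt_cminus_ge[OF assms(1,2)] by linarith
  then show ?thesis
    using assms(2) by (simp add: pos_divide_le_eq)
qed

lemma feasible_path_within_bound_L:
  assumes rsp: "rsp_setting V E src dst c r s t R" and sorted: "sorted_edges E c es"
  obtains p where "p \<in> feasible_paths E src dst r s t R"
    and "\<forall>e\<in>p. c e \<le> bound_L E src dst c r s t R es" and "bound_L E src dst c r s t R es \<ge> 0"
proof -
  have c_nonneg: "\<forall>e\<in>E. c e \<ge> 0" and "s \<noteq> t"
    and "\<exists>p. is_path E src dst s t p \<and> path_cost r p \<le> R"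
    using rsp unfolding rsp_setting_def by simp_all
  have es: "set es = E" "sorted (map c es)"
    using sorted unfolding sorted_edges_def by simp_all
  define uses_prefix where "uses_prefix =
    (\<lambda>j. \<exists>p. is_path E src dst s t p \<and> path_cost r p \<le> R \<and> p \<subseteq> set (take j es))"
  define j where "j = j_star E src dst r s t R es"
  have j_Least: "j = (LEAST j. uses_prefix j)"
    unfolding j_def j_star_def uses_prefix_def by simp
  have "uses_prefix (length es)"
  proof -
    obtain p where p: "is_path E src dst s t p" "path_cost r p \<le> R"
      using \<open>\<exists>p. _\<close> by blast
    moreover have "p \<subseteq> set (take (length es) es)"
      using is_path_subset[OF p(1)] es(1) by simp
    ultimately show ?thesis unfolding uses_prefix_def by blast
  qed
  then have "uses_prefix j" and j_le: "j \<le> length es"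
    unfolding j_Least by (rule LeastI, rule Least_le)
  then obtain p where p: "is_path E src dst s t p" "path_cost r p \<le> R" "p \<subseteq> set (take j es)"
    unfolding uses_prefix_def by blast
  have "j \<noteq> 0"
  proof
    assume "j = 0"
    then have "p = {}"
      using p(3) by simp
    obtain l where "p = set l" "last (s # map dst l) = t"
      using p(1) unfolding is_path_def by blast
    then show False
      using \<open>p = {}\<close> \<open>s \<noteq> t\<close> by simp
  qed
  have L: "bound_L E src dst c r s t R es = c (es ! (j - 1))"
    unfolding bound_L_def j_def ..
  have "c e \<le> bound_L E src dst c r s t R es" if "e \<in> p" for e
  proof -
    have "e \<in> set (take j es)"
      using \<open>e \<in> p\<close> p(3) by blast
    then obtain k where "k < length (take j es)" "take j es ! k = e"
      unfolding in_set_conv_nth by blast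
    then have "k \<le> j - 1" "j - 1 < length es" "e = es ! k"
      using j_le \<open>j \<noteq> 0\<close> by auto
    then show ?thesis
      using sorted_nth_mono[OF es(2), of k "j - 1"] unfolding L by simp
  qed
  moreover have "es ! (j - 1) \<in> E"
    using j_le \<open>j \<noteq> 0\<close> es(1) nth_mem[of "j - 1" es] by simp
  then have "bound_L E src dst c r s t R es \<ge> 0"
    using c_nonneg unfolding L by blast
  moreover have "p \<in> feasible_paths E src dst r s t R"
    using p unfolding feasible_paths_def by blast
  ultimately show ?thesis
    using that by blast
qed

lemma C_opt_le_bound_U:
  assumes rsp: "rsp_setting V E src dst c r s t R" and "sorted_edges E c es"
  shows "C_opt E src dst c r s t R \<le> bound_U V E src dst c r s t R es"
proof -
  let ?L = "bound_L E src dst c r s t R es"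
  obtain p where p: "p \<in> feasible_paths E src dst r s t R" "\<forall>e\<in>p. c e \<le> ?L" "?L \<ge> 0"
    using feasible_path_within_bound_L[OF assms] .
  have "C_opt E src dst c r s t R \<le> path_cost c p"
    using rsp p(1) by (rule rsp_setting_C_opt_le_path_cost)
  also have "\<dots> \<le> real (card p) * ?L"
    unfolding path_cost_def using p(2) sum_bounded_above[of p c ?L] by auto
  also have "\<dots> \<le> real (card V) * ?L"
    using rsp_setting_feasible_path_props(2)[OF rsp p(1)] p(3) by (intro mult_right_mono) auto
  finally show ?thesis
    unfolding bound_U_def .
qed

lemma scale_Suc: "scale V U (Suc i) = scale V U i / 2"
  unfolding scale_def by simp

lemma scale_0: "card V > 0 \<Longrightarrow> U = 2 * real (card V) * scale V U 0"
  unfolding scale_def by simp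

lemma bounds_at_least_exceeding_scale:
  fixes b :: nat
  assumes rsp: "rsp_setting V E src dst c r s t R" and sorted: "sorted_edges E c es"
    and "b > 0" and ex: "\<exists>i. C_opt E src dst (cminus c (scale V U i)) r s t R > real b"
    and U_def: "U = bound_U V E src dst c r s t R es"
    and istar_def: "istar = (LEAST i. C_opt E src dst (cminus c (scale V U i)) r s t R > real b)"
  shows "real b * scale V U istar \<le> C_opt E src dst c r s t R"
    and "C_opt E src dst c r s t R \<le>
           (if istar = 0 then U else 2 * scale V U istar * (real b + real (card V)))"
    and "(if istar = 0 then U else 2 * scale V U istar * (real b + real (card V)))
           / (real b * scale V U istar) \<le> 2 * (1 + real (card V) / real b)"
proof -
  let ?S = "scale V U istar"
  let ?U' = "if istar = 0 then U else 2 * ?S * (real b + real (card V))"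
  have gt: "C_opt E src dst (cminus c ?S) r s t R > real b"
    unfolding istar_def using ex by (rule LeastI_ex)
  have S_pos: "?S > 0"
    using scale_pos_if_C_opt_cminus_gt[OF rsp _ gt] by simp
  show "real b * ?S \<le> C_opt E src dst c r s t R"
    using rsp S_pos gt by (rule C_opt_lower_bound_from_scaled)
  show "C_opt E src dst c r s t R \<le> ?U'"
  proof (cases istar)
    case 0
    then show ?thesis
      unfolding U_def using C_opt_le_bound_U[OF rsp sorted] by simp
  next
    case (Suc k)
    have "\<not> C_opt E src dst (cminus c (scale V U k)) r s t R > real b"
      using Suc not_less_Least[of k "\<lambda>i. C_opt E src dst (cminus c (scale V U i)) r s t R > real b"]
      unfolding istar_def by simp
    then have "C_opt E src dst c r s t R \<le> (real b + real (card V)) * scale V U k"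
      using rsp S_pos Suc by (intro C_opt_upper_bound_from_scaled) (auto simp: scale_Suc)
    then show ?thesis
      using Suc by (simp add: scale_Suc algebra_simps)
  qed
  have "?U' \<le> 2 * ?S * (real b + real (card V))"
    using scale_0[OF rsp_setting_card_vertices_pos[OF rsp], of U] S_pos
    by (auto simp: algebra_simps)
  then have "?U' / (real b * ?S) \<le> 2 * ?S * (real b + real (card V)) / (real b * ?S)"
    using S_pos \<open>b > 0\<close> by (intro divide_right_mono) auto
  also have "\<dots> = 2 * (1 + real (card V) / real b)"
    using S_pos \<open>b > 0\<close> by (simp add: field_simps)
  finally show "?U' / (real b * ?S) \<le> 2 * (1 + real (card V) / real b)" .
qed

theorem lemma8:
  "\<exists>K::real. \<forall>(V::nat set) (E::nat set) (src::nat \<Rightarrow> nat) (dst::nat \<Rightarrow> nat)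
       (c::nat \<Rightarrow> real) (r::nat \<Rightarrow> real) s t (R::real) (es::nat list) (b::nat).
     rsp_setting V E src dst c r s t R \<and> sorted_edges E c es \<and> b > 0 \<and>
     (\<exists>i. C_opt E src dst (cminus c (scale V (bound_U V E src dst c r s t R es) i)) r s t R > real b)
     \<longrightarrow>
     (let n = real (card V);
          U = bound_U V E src dst c r s t R es;
          S = scale V U;
          istar = (LEAST i. C_opt E src dst (cminus c (S i)) r s t R > real b);
          L' = real b * S istar;
          U' = (if istar = 0 then U else 2 * S istar * (real b + n))
      in L' \<le> C_opt E src dst c r s t R \<and> C_opt E src dst c r s t R \<le> U' \<and>
         U' / L' \<le> K * (1 + n / real b))"
  unfolding Let_def
  by (intro exI[of _ 2] allI impI; elim conjE; intro conjI;
      rule bounds_at_least_exceeding_scale[OF _ _ _ _ refl refl]; assumption)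

end
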